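(* Let $I$ be the tridendriform ideal of $\mathcal{A}$ generated by $\{x\cdot y: x,y\in\mathcal{A}^+\}$. A tree $t$ of $\mathcal{A}$ is not binary (i.e. some internal vertex has at least three children) if and only if $t\in I$.
   Context: Trees: planar rooted trees in which every internal vertex has at least two children; the root vertex hangs from a trunk edge; leaves are edges without upper vertex; $|$ is the one-leaf tree; $\mathcal A$ is the $\mathbb K$-span of all trees, $\mathcal A^+$ that of trees $\neq|$. Products: $x_0\vee\cdots\vee x_k$ ($k\ge1$) grafts trees left to right on a new root; for $x=x^{(0)}\vee\cdots\vee x^{(k)}$, $y=y^{(0)}\vee\cdots\vee y^{(l)}$: $x\prec y=x^{(0)}\vee\cdots\vee x^{(k-1)}\vee(x^{(k)}*y)$, $x\cdot y=x^{(0)}\vee\cdots\vee x^{(k-1)}\vee(x^{(k)}*y^{(0)})\vee y^{(1)}\vee\cdots\vee y^{(l)}$, $x\succ y=(x*y^{(0)})\vee y^{(1)}\vee\cdots\vee y^{(l)}$, $*=\prec+\cdot+\succ$, $|*z=z*|=z$; for $a\in\mathcal A^+$: $|\prec a=0$, $a\prec|=a$, $|\succ a=a$, $a\succ|=0$, $|\cdot a=a\cdot|=0$. A tridendriform ideal is a subspace $J$ such that $x\ltimes y\in J$ whenever $x\in J$ or $y\in J$, for $\ltimes\in\{\prec,\cdot,\succ\}$; the ideal generated by a set is the smallest tridendriform ideal containing it. *)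

theory Defs
  imports Main
begin

text \<open>Leaf is the one-leaf tree |; Node [x0,...,xk] is x0 v ... v xk.
  Only well-formed trees (every internal vertex has at least two children) are used.\<close>

datatype tree = Leaf | Node "tree list"

fun wf_tree :: "tree \<Rightarrow> bool" where
  "wf_tree Leaf = True"
| "wf_tree (Node ts) = (2 \<le> length ts \<and> (\<forall>t\<in>set ts. wf_tree t))"

fun binary_tree :: "tree \<Rightarrow> bool" where
  "binary_tree Leaf = True"
| "binary_tree (Node ts) = (length ts = 2 \<and> (\<forall>t\<in>set ts. binary_tree t))"

section \<open>Linear combinations of trees (finitely supported functions)\<close>

definition supp :: "(tree \<Rightarrow> 'k::field) \<Rightarrow> tree set" where
  "supp f = {t. f t \<noteq> 0}"

definition basis :: "tree \<Rightarrow> tree \<Rightarrow> 'k::field" where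
  "basis t = (\<lambda>s. if s = t then 1 else 0)"

definition Aspace :: "(tree \<Rightarrow> 'k::field) set" where
  "Aspace = {f. finite (supp f) \<and> (\<forall>t\<in>supp f. wf_tree t)}"

definition Aplus :: "(tree \<Rightarrow> 'k::field) set" where
  "Aplus = {f. f \<in> Aspace \<and> f Leaf = 0}"

definition lmap :: "(tree \<Rightarrow> tree) \<Rightarrow> (tree \<Rightarrow> 'k::field) \<Rightarrow> tree \<Rightarrow> 'k" where
  "lmap h f = (\<lambda>s. \<Sum>t\<in>{t. f t \<noteq> 0 \<and> h t = s}. f t)"

function star_t :: "tree \<Rightarrow> tree \<Rightarrow> tree \<Rightarrow> 'k::field" where
  "star_t Leaf y = basis y"
| "star_t (Node xs) Leaf = basis (Node xs)"
| "star_t (Node []) (Node ys) = (\<lambda>_. 0)"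
| "star_t (Node (x # xs)) (Node []) = (\<lambda>_. 0)"
| "star_t (Node (x # xs)) (Node (y # ys)) =
     (\<lambda>s. lmap (\<lambda>t. Node (butlast (x # xs) @ [t])) (star_t (last (x # xs)) (Node (y # ys))) s
        + lmap (\<lambda>t. Node (butlast (x # xs) @ [t] @ ys)) (star_t (last (x # xs)) y) s
        + lmap (\<lambda>t. Node (t # ys)) (star_t (Node (x # xs)) y) s)"
  by pat_completeness auto

lemma size_last_less: "size (last (x # xs)) < Suc (size_list size (x # xs))"
proof -
  have "last (x # xs) \<in> set (x # xs)" by simp
  then have "size (last (x # xs)) \<le> size_list size (x # xs)"
    by (rule size_list_estimation') simp
  then show ?thesis by simp
qed

termination
  by (relation "measure (\<lambda>(x, y). size x + size y)")
     (auto simp del: last.simps intro: less_le_trans[OF size_last_less])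

definition prec_t :: "tree \<Rightarrow> tree \<Rightarrow> tree \<Rightarrow> 'k::field" where
  "prec_t x y = (case x of Leaf \<Rightarrow> (\<lambda>_. 0)
     | Node xs \<Rightarrow> (if y = Leaf then basis x
        else lmap (\<lambda>t. Node (butlast xs @ [t])) (star_t (last xs) y)))"

definition dot_t :: "tree \<Rightarrow> tree \<Rightarrow> tree \<Rightarrow> 'k::field" where
  "dot_t x y = (case x of Leaf \<Rightarrow> (\<lambda>_. 0)
     | Node xs \<Rightarrow> (case y of Leaf \<Rightarrow> (\<lambda>_. 0)
        | Node ys \<Rightarrow> lmap (\<lambda>t. Node (butlast xs @ [t] @ tl ys)) (star_t (last xs) (hd ys))))"

definition succ_t :: "tree \<Rightarrow> tree \<Rightarrow> tree \<Rightarrow> 'k::field" where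
  "succ_t x y = (case y of Leaf \<Rightarrow> (\<lambda>_. 0)
     | Node ys \<Rightarrow> (if x = Leaf then basis y
        else lmap (\<lambda>t. Node (t # tl ys)) (star_t x (hd ys))))"

definition bil :: "(tree \<Rightarrow> tree \<Rightarrow> tree \<Rightarrow> 'k::field) \<Rightarrow> (tree \<Rightarrow> 'k) \<Rightarrow> (tree \<Rightarrow> 'k) \<Rightarrow> tree \<Rightarrow> 'k" where
  "bil op f g = (\<lambda>s. \<Sum>t\<in>supp f. \<Sum>u\<in>supp g. f t * g u * op t u s)"

definition tridend_ideal :: "(tree \<Rightarrow> 'k::field) set \<Rightarrow> bool" where
  "tridend_ideal J \<longleftrightarrow> J \<subseteq> Aspace \<and> (\<lambda>_. 0) \<in> J
     \<and> (\<forall>f\<in>J. \<forall>g\<in>J. (\<lambda>s. f s + g s) \<in> J)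
     \<and> (\<forall>c. \<forall>f\<in>J. (\<lambda>s. c * f s) \<in> J)
     \<and> (\<forall>x\<in>Aspace. \<forall>y\<in>Aspace. (x \<in> J \<or> y \<in> J) \<longrightarrow>
          bil prec_t x y \<in> J \<and> bil dot_t x y \<in> J \<and> bil succ_t x y \<in> J)"

definition gen_tridend_ideal :: "(tree \<Rightarrow> 'k::field) set \<Rightarrow> (tree \<Rightarrow> 'k) set" where
  "gen_tridend_ideal G = \<Inter>{J. tridend_ideal J \<and> G \<subseteq> J}"

end

theory Submission
  imports Defs
begin

text \<open>
  The excess of a tree is the number of its leaves minus the number of its internal vertices minus one.
  It is nonnegative on well-formed trees and vanishes exactly on binary ones. Grafting a tree onto a
  leaf adds excesses, so every tree occurring in \<open>x \<prec> y\<close>, \<open>x \<succ> y\<close> or \<open>x * y\<close> has excess at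
  least \<open>e x + e y\<close>, and every tree occurring in \<open>x \<cdot> y\<close> at least \<open>e x + e y + 1\<close>, because the
  two roots are merged into one vertex. Hence the combinations of trees of excess at least 1 form a
  tridendriform ideal containing all products \<open>x \<cdot> y\<close> but no binary tree.

  Conversely, a tree whose root has at least three children factors as
  \<open>(x\<^sub>0 \<vee> x\<^sub>1) \<cdot> (| \<vee> x\<^sub>2 \<vee> \<dots>)\<close>, and a tree \<open>A \<vee> c \<vee> B\<close> with a non-binary child \<open>c\<close> arises from
  \<open>c\<close> as \<open>c \<succ> (| \<vee> B)\<close>, \<open>(A \<vee> |) \<prec> c\<close> or \<open>(A \<vee> |) \<cdot> (c \<vee> B)\<close>; induction on the tree
  concludes.
\<close>

fun excess :: "tree \<Rightarrow> int" where
  "excess Leaf = 0"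
| "excess (Node ts) = sum_list (map excess ts) + int (length ts) - 2"

lemma sum_list_map_nonneg:
  "(\<And>x. x \<in> set xs \<Longrightarrow> 0 \<le> f x) \<Longrightarrow> 0 \<le> sum_list (map f xs :: 'a::ordered_comm_monoid_add list)"
  by (rule sum_list_nonneg) auto

lemma excess_nonneg: "wf_tree t \<Longrightarrow> 0 \<le> excess t"
proof (induction t)
  case (Node ts)
  then have "0 \<le> sum_list (map excess ts)" by (auto intro: sum_list_map_nonneg)
  with Node.prems show ?case by simp
qed simp

lemma excess_pos_iff_not_binary: "wf_tree t \<Longrightarrow> 0 < excess t \<longleftrightarrow> \<not> binary_tree t"
proof (induction t)
  case (Node ts)
  then have len: "2 \<le> length ts" and wf: "\<And>c. c \<in> set ts \<Longrightarrow> wf_tree c" by auto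
  have "sum_list (map excess ts) = 0 \<longleftrightarrow> (\<forall>c\<in>set ts. excess c = 0)"
    using sum_list_nonneg_eq_0_iff[of "map excess ts"] by (auto intro: excess_nonneg wf)
  also have "\<dots> \<longleftrightarrow> (\<forall>c\<in>set ts. binary_tree c)"
    using Node.IH wf excess_nonneg by force
  finally have "sum_list (map excess ts) = 0 \<longleftrightarrow> (\<forall>c\<in>set ts. binary_tree c)" .
  moreover have "0 \<le> sum_list (map excess ts)"
    by (auto intro: sum_list_map_nonneg excess_nonneg wf)
  ultimately show ?case using len by auto
qed simp

lemma excess_graft: "excess (Node (L @ t # R)) = excess (Node (L @ Leaf # R)) + excess t"
  by simp

lemma wf_tree_graft: "wf_tree (Node (L @ t # R)) \<longleftrightarrow> wf_tree (Node (L @ Leaf # R)) \<and> wf_tree t"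
  by auto

definition excess_ge :: "int \<Rightarrow> (tree \<Rightarrow> 'k::field) set" where
  "excess_ge n = {f \<in> Aspace. \<forall>s\<in>supp f. n \<le> excess s}"

lemma excess_ge_antimono: "m \<le> n \<Longrightarrow> excess_ge n \<subseteq> excess_ge m"
  by (auto simp: excess_ge_def)

lemma excess_ge_0: "excess_ge 0 = Aspace"
  by (auto simp: excess_ge_def Aspace_def intro: excess_nonneg)

lemma supp_basis: "supp (basis t :: tree \<Rightarrow> 'k::field) = {t}"
  by (auto simp: supp_def basis_def)

lemma basis_in_excess_ge: "basis t \<in> excess_ge n \<longleftrightarrow> wf_tree t \<and> n \<le> excess t"
  by (simp add: excess_ge_def Aspace_def supp_basis)

lemma zero_in_excess_ge: "(\<lambda>_. 0) \<in> excess_ge n"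
  by (simp add: excess_ge_def Aspace_def supp_def)

lemma add_in_excess_ge:
  assumes "f \<in> excess_ge n" "g \<in> excess_ge n"
  shows "(\<lambda>s. f s + g s) \<in> excess_ge n"
proof -
  have "supp (\<lambda>s. f s + g s) \<subseteq> supp f \<union> supp g" by (auto simp: supp_def)
  with assms show ?thesis by (auto simp: excess_ge_def Aspace_def intro: finite_subset)
qed

lemma scale_in_excess_ge: "f \<in> excess_ge n \<Longrightarrow> (\<lambda>s. c * f s) \<in> excess_ge n"
  by (auto simp: excess_ge_def Aspace_def supp_def intro: rev_finite_subset)

lemma supp_lmap: "supp (lmap h f) \<subseteq> h ` supp f"
proof
  fix s assume "s \<in> supp (lmap h f)"
  then have "{t. f t \<noteq> 0 \<and> h t = s} \<noteq> {}" by (force simp: supp_def lmap_def)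
  then show "s \<in> h ` supp f" by (auto simp: supp_def)
qed

lemma lmap_graft_in_excess_ge:
  assumes F: "F \<in> excess_ge n" and wf: "wf_tree (Node (L @ Leaf # R))"
  shows "lmap (\<lambda>t. Node (L @ t # R)) F \<in> excess_ge (n + excess (Node (L @ Leaf # R)))"
proof -
  have "finite (supp (lmap (\<lambda>t. Node (L @ t # R)) F))"
    using F by (auto simp: excess_ge_def Aspace_def intro: finite_subset[OF supp_lmap])
  moreover have "wf_tree s \<and> n + excess (Node (L @ Leaf # R)) \<le> excess s"
    if "s \<in> supp (lmap (\<lambda>t. Node (L @ t # R)) F)" for s
    using F wf supp_lmap that excess_graft[of L _ R] wf_tree_graft[of L _ R]
    by (fastforce simp: excess_ge_def Aspace_def)
  ultimately show ?thesis by (simp add: excess_ge_def Aspace_def)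
qed

lemma wf_tree_Node_split_last:
  assumes wf: "wf_tree (Node X)"
  shows "wf_tree (Node (butlast X @ [Leaf]))" "wf_tree (last X)"
    and "excess (Node X) = excess (Node (butlast X @ [Leaf])) + excess (last X)"
proof -
  have "X = butlast X @ [last X]" using wf by (intro append_butlast_last_id[symmetric]) auto
  then show "wf_tree (Node (butlast X @ [Leaf]))" "wf_tree (last X)"
      "excess (Node X) = excess (Node (butlast X @ [Leaf])) + excess (last X)"
    using wf wf_tree_graft[of "butlast X" "last X" "[]"] excess_graft[of "butlast X" "last X" "[]"]
    by simp_all
qed

lemma lmap_graft_last_in_excess_ge:
  assumes F: "F \<in> excess_ge (excess (last X) + n)" and wf: "wf_tree (Node X)"
  shows "lmap (\<lambda>t. Node (butlast X @ [t])) F \<in> excess_ge (excess (Node X) + n)"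
  using lmap_graft_in_excess_ge[OF F wf_tree_Node_split_last(1)[OF wf]]
    wf_tree_Node_split_last(3)[OF wf]
  by (simp del: excess.simps add: algebra_simps)

lemma lmap_graft_middle_in_excess_ge:
  assumes F: "F \<in> excess_ge (excess (last X) + excess y)"
    and wf: "wf_tree (Node X)" "wf_tree (Node (y # ys))"
  shows "lmap (\<lambda>t. Node (butlast X @ [t] @ ys)) F
    \<in> excess_ge (excess (Node X) + excess (Node (y # ys)) + 1)"
proof -
  have wf_mid: "wf_tree (Node (butlast X @ Leaf # ys))"
    using wf wf_tree_Node_split_last(1)[OF wf(1)] by auto
  have "excess (Node (butlast X @ Leaf # ys))
      = excess (Node (butlast X @ [Leaf])) + excess (Node (Leaf # ys)) + 1"
    and "excess (Node (y # ys)) = excess (Node (Leaf # ys)) + excess y"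
    by simp_all
  then show ?thesis
    using lmap_graft_in_excess_ge[OF F wf_mid] wf_tree_Node_split_last(3)[OF wf(1)]
    by (simp del: excess.simps add: algebra_simps)
qed

lemma lmap_graft_first_in_excess_ge:
  assumes F: "F \<in> excess_ge (n + excess y)" and wf: "wf_tree (Node (y # ys))"
  shows "lmap (\<lambda>t. Node (t # ys)) F \<in> excess_ge (n + excess (Node (y # ys)))"
  using lmap_graft_in_excess_ge[OF F, of "[]" ys] wf by (simp add: algebra_simps)

lemma star_t_in_excess_ge:
  "wf_tree x \<Longrightarrow> wf_tree y \<Longrightarrow>
    (star_t x y :: tree \<Rightarrow> 'k::field) \<in> excess_ge (excess x + excess y)"
proof (induction x y rule: star_t.induct)
  case (5 x xs y ys)
  define X where "X = x # xs"
  define n where "n = excess (Node X) + excess (Node (y # ys))"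
  note IH = "5.IH"[folded X_def]
  have wf: "wf_tree (Node X)" "wf_tree (Node (y # ys))" "wf_tree y"
    using "5.prems" by (auto simp: X_def)
  have wf_last: "wf_tree (last X)" using wf_tree_Node_split_last(2)[OF wf(1)] .
  have "lmap (\<lambda>t. Node (butlast X @ [t])) (star_t (last X) (Node (y # ys)) :: tree \<Rightarrow> 'k)
      \<in> excess_ge n"
    unfolding n_def by (rule lmap_graft_last_in_excess_ge[OF IH(1)[OF wf_last wf(2)] wf(1)])
  moreover have "lmap (\<lambda>t. Node (butlast X @ [t] @ ys)) (star_t (last X) y :: tree \<Rightarrow> 'k)
      \<in> excess_ge n"
    using lmap_graft_middle_in_excess_ge[OF IH(2)[OF wf_last wf(3)] wf(1,2)]
      excess_ge_antimono[of n "n + 1"]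
    unfolding n_def by auto
  moreover have "lmap (\<lambda>t. Node (t # ys)) (star_t (Node X) y :: tree \<Rightarrow> 'k) \<in> excess_ge n"
    unfolding n_def by (rule lmap_graft_first_in_excess_ge[OF IH(3)[OF wf(1,3)] wf(2)])
  ultimately show ?case
    unfolding star_t.simps(5) by (simp only: add_in_excess_ge flip: X_def n_def)
qed (simp_all add: basis_in_excess_ge zero_in_excess_ge)

lemma prec_t_in_excess_ge:
  assumes wf: "wf_tree a" "wf_tree b"
  shows "(prec_t a b :: tree \<Rightarrow> 'k::field) \<in> excess_ge (excess a + excess b)"
proof (cases "a = Leaf \<or> b = Leaf")
  case False
  then obtain xs where a: "a = Node xs" by (cases a) auto
  have "prec_t a b = lmap (\<lambda>t. Node (butlast xs @ [t])) (star_t (last xs) b)"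
    using False by (simp add: prec_t_def a)
  also have "\<dots> \<in> excess_ge (excess a + excess b)"
    using wf unfolding a
    by (intro lmap_graft_last_in_excess_ge star_t_in_excess_ge wf_tree_Node_split_last(2))
  finally show ?thesis .
qed (use wf in \<open>auto simp: prec_t_def basis_in_excess_ge zero_in_excess_ge split: tree.split\<close>)

lemma succ_t_in_excess_ge:
  assumes wf: "wf_tree a" "wf_tree b"
  shows "(succ_t a b :: tree \<Rightarrow> 'k::field) \<in> excess_ge (excess a + excess b)"
proof (cases "a = Leaf \<or> b = Leaf")
  case False
  then obtain ys0 where "b = Node ys0" by (cases b) auto
  moreover obtain y ys where "ys0 = y # ys" using wf(2) calculation by (cases ys0) auto
  ultimately have b: "b = Node (y # ys)" by simp
  have "succ_t a b = lmap (\<lambda>t. Node (t # ys)) (star_t a y)"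
    using False by (simp add: succ_t_def b)
  also have "\<dots> \<in> excess_ge (excess a + excess b)"
    using wf unfolding b by (intro lmap_graft_first_in_excess_ge star_t_in_excess_ge) auto
  finally show ?thesis .
qed (use wf in \<open>auto simp: succ_t_def basis_in_excess_ge zero_in_excess_ge split: tree.split\<close>)

lemma dot_t_in_excess_ge:
  assumes wf: "wf_tree a" "wf_tree b"
  shows "(dot_t a b :: tree \<Rightarrow> 'k::field) \<in> excess_ge (excess a + excess b + 1)"
proof (cases "a = Leaf \<or> b = Leaf")
  case False
  then obtain xs ys0 where a: "a = Node xs" and "b = Node ys0" by (cases a; cases b) auto
  moreover obtain y ys where "ys0 = y # ys" using wf(2) calculation by (cases ys0) auto
  ultimately have b: "b = Node (y # ys)" by simp
  have "dot_t a b = lmap (\<lambda>t. Node (butlast xs @ [t] @ ys)) (star_t (last xs) y)"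
    by (simp add: dot_t_def a b)
  also have "\<dots> \<in> excess_ge (excess a + excess b + 1)"
    using wf unfolding a b
    by (intro lmap_graft_middle_in_excess_ge star_t_in_excess_ge wf_tree_Node_split_last(2)) auto
  finally show ?thesis .
qed (auto simp: dot_t_def zero_in_excess_ge split: tree.split)

lemma supp_bil: "supp (bil op f g) \<subseteq> (\<Union>t\<in>supp f. \<Union>u\<in>supp g. supp (op t u))"
proof
  fix s assume "s \<in> supp (bil op f g)"
  then have "(\<Sum>t\<in>supp f. \<Sum>u\<in>supp g. f t * g u * op t u s) \<noteq> 0"
    by (simp add: supp_def bil_def)
  then obtain t u where "t \<in> supp f" "u \<in> supp g" "f t * g u * op t u s \<noteq> 0"
    by (meson sum.not_neutral_contains_not_neutral)
  then show "s \<in> (\<Union>t\<in>supp f. \<Union>u\<in>supp g. supp (op t u))"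
    by (auto simp: supp_def)
qed

lemma bil_in_excess_ge:
  assumes op: "\<And>t u. wf_tree t \<Longrightarrow> wf_tree u \<Longrightarrow> op t u \<in> excess_ge (excess t + excess u + k)"
    and x: "x \<in> excess_ge m" and y: "y \<in> excess_ge n"
  shows "bil op x y \<in> excess_ge (m + n + k)"
proof -
  have op_supp: "op t u \<in> excess_ge (m + n + k)" if "t \<in> supp x" "u \<in> supp y" for t u
  proof -
    have "wf_tree t" "wf_tree u" and le: "m + n + k \<le> excess t + excess u + k"
      using x y that by (auto simp: excess_ge_def Aspace_def intro: add_mono)
    then have "op t u \<in> excess_ge (excess t + excess u + k)" by (intro op)
    then show ?thesis using excess_ge_antimono[OF le] by blast
  qed
  have "finite (supp (op t u))" if "t \<in> supp x" "u \<in> supp y" for t u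
    using op_supp[OF that] by (simp add: excess_ge_def Aspace_def)
  moreover have "finite (supp x)" "finite (supp y)"
    using x y by (simp_all add: excess_ge_def Aspace_def)
  ultimately have "finite (\<Union>t\<in>supp x. \<Union>u\<in>supp y. supp (op t u))"
    by simp
  then have "finite (supp (bil op x y))"
    by (rule finite_subset[OF supp_bil])
  moreover have "wf_tree s \<and> m + n + k \<le> excess s" if s: "s \<in> supp (bil op x y)" for s
  proof -
    obtain t u where tu: "t \<in> supp x" "u \<in> supp y" and "s \<in> supp (op t u)"
      using supp_bil s by blast
    then show ?thesis using op_supp[OF tu] by (simp add: excess_ge_def Aspace_def)
  qed
  ultimately show ?thesis by (simp add: excess_ge_def Aspace_def)
qed

lemma tridend_ideal_excess_ge: "tridend_ideal (excess_ge n :: (tree \<Rightarrow> 'k::field) set)"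
  unfolding tridend_ideal_def
proof (intro conjI ballI allI impI)
  show "excess_ge n \<subseteq> Aspace" by (auto simp: excess_ge_def)
next
  fix x y :: "tree \<Rightarrow> 'k"
  assume "x \<in> Aspace" "y \<in> Aspace" "x \<in> excess_ge n \<or> y \<in> excess_ge n"
  then obtain m m' where x: "x \<in> excess_ge m" and y: "y \<in> excess_ge m'" and "m + m' = n"
    unfolding excess_ge_0[symmetric] by (elim disjE) auto
  then have "excess_ge (m + m' + 1) \<subseteq> (excess_ge n :: (tree \<Rightarrow> 'k) set)"
    by (intro excess_ge_antimono) simp
  then show "bil prec_t x y \<in> excess_ge n" "bil dot_t x y \<in> excess_ge n"
    "bil succ_t x y \<in> excess_ge n"
    using bil_in_excess_ge[of prec_t 0, simplified, OF prec_t_in_excess_ge x y]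
      bil_in_excess_ge[OF dot_t_in_excess_ge x y]
      bil_in_excess_ge[of succ_t 0, simplified, OF succ_t_in_excess_ge x y] \<open>m + m' = n\<close> by auto
qed (simp_all add: zero_in_excess_ge add_in_excess_ge scale_in_excess_ge)

lemma generators_subset_excess_ge:
  "{bil dot_t x y | x y. x \<in> Aplus \<and> y \<in> Aplus} \<subseteq> (excess_ge 1 :: (tree \<Rightarrow> 'k::field) set)"
proof clarify
  fix x y :: "tree \<Rightarrow> 'k" assume "x \<in> Aplus" "y \<in> Aplus"
  then have "x \<in> excess_ge 0" "y \<in> excess_ge 0" by (simp_all add: Aplus_def excess_ge_0)
  from bil_in_excess_ge[OF dot_t_in_excess_ge this] show "bil dot_t x y \<in> excess_ge 1" by simp
qed

lemma basis_in_Aspace_iff: "basis t \<in> Aspace \<longleftrightarrow> wf_tree t"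
  using basis_in_excess_ge[of t 0] excess_nonneg by (auto simp: excess_ge_0)

lemma basis_in_Aplus_iff: "basis t \<in> Aplus \<longleftrightarrow> wf_tree t \<and> t \<noteq> Leaf"
  by (simp add: Aplus_def basis_in_Aspace_iff) (auto simp: basis_def)

lemma lmap_basis: "lmap h (basis a :: tree \<Rightarrow> 'k::field) = basis (h a)"
proof
  fix s
  have "{t. (basis a t :: 'k) \<noteq> 0 \<and> h t = s} = (if h a = s then {a} else {})"
    by (auto simp: basis_def)
  then show "lmap h (basis a :: tree \<Rightarrow> 'k) s = basis (h a) s"
    by (simp add: lmap_def basis_def)
qed

lemma bil_basis: "bil op (basis a) (basis b :: tree \<Rightarrow> 'k::field) = op a b"
  unfolding bil_def supp_basis by (rule ext) (simp add: basis_def)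

lemma star_t_Leaf_right: "star_t x Leaf = basis x"
  by (cases x) simp_all

lemma tridend_ideal_basis_ops:
  assumes J: "tridend_ideal J" and wf: "wf_tree a" "wf_tree b"
    and mem: "(basis a :: tree \<Rightarrow> 'k::field) \<in> J \<or> basis b \<in> J"
  shows "prec_t a b \<in> J" "dot_t a b \<in> J" "succ_t a b \<in> J"
  using J mem wf unfolding tridend_ideal_def
  by (metis bil_basis basis_in_Aspace_iff)+

lemma basis_graft_in_ideal:
  assumes J: "tridend_ideal J" and c: "(basis c :: tree \<Rightarrow> 'k::field) \<in> J" "c \<noteq> Leaf"
    and wf: "wf_tree (Node (A @ c # B))"
  shows "basis (Node (A @ c # B)) \<in> J"
proof -
  have wf_c: "wf_tree c" using wf by simp
  have right: "(basis (Node (c # B)) :: tree \<Rightarrow> 'k) \<in> J" if "B \<noteq> []"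
  proof -
    have "wf_tree (Node (Leaf # B))" using wf that by (cases B) auto
    then have "succ_t c (Node (Leaf # B)) \<in> J"
      using tridend_ideal_basis_ops(3)[OF J wf_c] c by blast
    then show ?thesis using c(2) by (simp add: succ_t_def star_t_Leaf_right lmap_basis)
  qed
  show ?thesis
  proof (cases "A = []")
    case True
    with wf have "B \<noteq> []" by auto
    with right True show ?thesis by simp
  next
    case False
    with wf have wf_A: "wf_tree (Node (A @ [Leaf]))" by (cases A) auto
    show ?thesis
    proof (cases "B = []")
      case True
      have "prec_t (Node (A @ [Leaf])) c \<in> J"
        using tridend_ideal_basis_ops(1)[OF J wf_A wf_c] c by blast
      with True c(2) show ?thesis by (simp add: prec_t_def lmap_basis)
    next
      case False
      have "wf_tree (Node (c # B))" using wf False by (cases B) auto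
      then have "dot_t (Node (A @ [Leaf])) (Node (c # B)) \<in> J"
        using tridend_ideal_basis_ops(2)[OF J wf_A] right[OF False] by blast
      then show ?thesis by (simp add: dot_t_def lmap_basis)
    qed
  qed
qed

lemma basis_three_children_eq_dot:
  "(basis (Node (x0 # x1 # x2 # xs)) :: tree \<Rightarrow> 'k::field)
    = bil dot_t (basis (Node [x0, x1])) (basis (Node (Leaf # x2 # xs)))"
  by (simp add: bil_basis dot_t_def star_t_Leaf_right lmap_basis)

lemma basis_in_ideal_if_not_binary:
  assumes J: "tridend_ideal (J :: (tree \<Rightarrow> 'k::field) set)"
    and gen: "{bil dot_t x y | x y. x \<in> Aplus \<and> y \<in> Aplus} \<subseteq> J"
  shows "wf_tree t \<Longrightarrow> \<not> binary_tree t \<Longrightarrow> (basis t :: tree \<Rightarrow> 'k) \<in> J"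
proof (induction t)
  case (Node ts)
  then have wf: "2 \<le> length ts" "\<And>c. c \<in> set ts \<Longrightarrow> wf_tree c" by auto
  show ?case
  proof (cases "\<forall>c\<in>set ts. binary_tree c")
    case True
    with Node.prems wf(1) obtain x0 x1 x2 xs where ts: "ts = x0 # x1 # x2 # xs"
      by (cases ts; cases "tl ts"; cases "tl (tl ts)") auto
    have "basis (Node [x0, x1]) \<in> (Aplus :: (tree \<Rightarrow> 'k) set)"
      "basis (Node (Leaf # x2 # xs)) \<in> (Aplus :: (tree \<Rightarrow> 'k) set)"
      using wf(2) by (simp_all add: basis_in_Aplus_iff ts)
    then show ?thesis using gen basis_three_children_eq_dot[of x0 x1 x2 xs] ts by blast
  next
    case False
    then obtain c A B where ts: "ts = A @ c # B" and c: "\<not> binary_tree c"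
      by (auto dest: split_list)
    then have "basis c \<in> J" "c \<noteq> Leaf"
      using Node.IH wf(2) by auto
    with Node.prems(1) show ?thesis
      unfolding ts by (intro basis_graft_in_ideal J)
  qed
qed simp

theorem mainTheorem18:
  fixes t :: tree
  assumes "wf_tree t"
  shows "\<not> binary_tree t \<longleftrightarrow>
    (basis t :: tree \<Rightarrow> 'k::field) \<in>
      gen_tridend_ideal {bil dot_t x y | x y. x \<in> Aplus \<and> y \<in> Aplus}"
proof -
  let ?G = "{bil dot_t x y | x y. x \<in> Aplus \<and> y \<in> Aplus} :: (tree \<Rightarrow> 'k) set"
  have "basis t \<in> gen_tridend_ideal ?G" if "\<not> binary_tree t"
    unfolding gen_tridend_ideal_def using basis_in_ideal_if_not_binary assms that by blast
  moreover have "\<not> binary_tree t" if "basis t \<in> gen_tridend_ideal ?G"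
  proof -
    have "basis t \<in> (excess_ge 1 :: (tree \<Rightarrow> 'k) set)"
      using that tridend_ideal_excess_ge generators_subset_excess_ge
      unfolding gen_tridend_ideal_def by blast
    then show ?thesis using excess_pos_iff_not_binary[OF assms] by (simp add: basis_in_excess_ge)
  qed
  ultimately show ?thesis by blast
qed

end
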